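(* Let $\alpha\in(0,1)\setminus\mathbb{Q}$. There is $\beta_0>0$ such that for every irrational $\beta\in(0,\beta_0)$ and every $p\in(0,1)$ the following holds. Let $i_1,i_2,\dots$ be i.i.d. random variables with $\mathbb{P}(i_n=1)=p$, $\mathbb{P}(i_n=2)=1-p$, and let $F_n=T_{i_1}\circ T_{i_2}\circ\dots\circ T_{i_n}$. Then almost surely $\lim_{n\to\infty}\mathrm{Leb}(F_n(\mathbb{S}))=0$.
   Context: $\mathbb{S}=\mathbb{R}/\mathbb{Z}$ with Lebesgue measure, points represented by $y\in[0,1)$. Let $\delta=1-\alpha$. $T_1(y)=y+\alpha \bmod 1$. $T_2$ is the double rotation $T_2(y)=y+\alpha+\beta\bmod 1$ if $y\le\delta$, and $T_2(y)=y+\alpha\bmod1$ if $y>\delta$. *)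

theory Defs
  imports "HOL-Probability.Probability"
begin

text \<open>Points of the circle R/Z are represented by y in [0,1); reduction mod 1 is frac.\<close>

definition T1 :: "real \<Rightarrow> real \<Rightarrow> real" where
  "T1 \<alpha> y = frac (y + \<alpha>)"

definition T2 :: "real \<Rightarrow> real \<Rightarrow> real \<Rightarrow> real" where
  "T2 \<alpha> \<beta> y = (if y \<le> 1 - \<alpha> then frac (y + \<alpha> + \<beta>) else frac (y + \<alpha>))"

text \<open>Choice of map: True means T1 (probability p), False means T2 (probability 1-p).\<close>
definition Tsel :: "real \<Rightarrow> real \<Rightarrow> bool \<Rightarrow> real \<Rightarrow> real" where
  "Tsel \<alpha> \<beta> b = (if b then T1 \<alpha> else T2 \<alpha> \<beta>)"

text \<open>F n \<omega> = T_{i_1} o ... o T_{i_n} with i_k encoded by \<omega> (k-1).\<close>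
fun Fcomp :: "real \<Rightarrow> real \<Rightarrow> nat \<Rightarrow> (nat \<Rightarrow> bool) \<Rightarrow> real \<Rightarrow> real" where
  "Fcomp \<alpha> \<beta> 0 \<omega> = id"
| "Fcomp \<alpha> \<beta> (Suc n) \<omega> = Fcomp \<alpha> \<beta> n \<omega> \<circ> Tsel \<alpha> \<beta> (\<omega> n)"

definition sel_space :: "real \<Rightarrow> (nat \<Rightarrow> bool) measure" where
  "sel_space p = PiM UNIV (\<lambda>_::nat. measure_pmf (bernoulli_pmf p))"

end

theory Submission
  imports Defs
begin

text \<open>
  The double rotation \<open>T2\<close> cuts an arc of the circle at its discontinuity \<open>1 - \<alpha>\<close> and
  advances one of the two pieces by \<open>\<beta>\<close> relative to the other, while rotations by the
  irrational \<open>\<alpha>\<close> move the pieces to any desired position. Repeating this, the offset between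
  the pieces runs along the orbit of \<open>\<beta>\<close>; at its first return close to \<open>0\<close> the pieces overlap
  and together form a strictly shorter arc. An infimum argument on the arc length then gives,
  for every \<open>\<epsilon> > 0\<close>, a finite word of maps sending the whole circle into an arc of length
  \<open>\<epsilon>\<close>. The maps do not increase Lebesgue measure, and almost every i.i.d. sequence contains
  every finite word as a block, so the measure of the image of the circle under \<open>F\<^sub>n\<close> tends
  to \<open>0\<close> almost surely.
\<close>

section \<open>Arcs of the circle and words of maps\<close>

definition circle_arc :: "real \<Rightarrow> real \<Rightarrow> real set" where
  "circle_arc c L = frac ` {c..c+L}"

fun apply_word :: "real \<Rightarrow> real \<Rightarrow> bool list \<Rightarrow> real set \<Rightarrow> real set" where
  "apply_word \<alpha> \<beta> [] X = X"
| "apply_word \<alpha> \<beta> (b # w) X = apply_word \<alpha> \<beta> w (Tsel \<alpha> \<beta> b ` X)"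

lemma apply_word_append: "apply_word \<alpha> \<beta> (v @ w) X = apply_word \<alpha> \<beta> w (apply_word \<alpha> \<beta> v X)"
  by (induction v arbitrary: X) auto

lemma apply_word_mono: "X \<subseteq> Y \<Longrightarrow> apply_word \<alpha> \<beta> w X \<subseteq> apply_word \<alpha> \<beta> w Y"
  by (induction w arbitrary: X Y) (simp_all add: image_mono)

lemma apply_word_Un: "apply_word \<alpha> \<beta> w (X \<union> Y) = apply_word \<alpha> \<beta> w X \<union> apply_word \<alpha> \<beta> w Y"
  by (induction w arbitrary: X Y) (simp_all add: image_Un)

lemma circle_arc_shift:
  assumes "c' - c \<in> \<int>"
  shows "circle_arc c' L = circle_arc c L"
proof -
  have "circle_arc c L = (\<lambda>x. frac (x + (c' - c))) ` {c..c+L}"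
    using assms by (simp add: circle_arc_def frac_add_int_right)
  also have "\<dots> = frac ` ((\<lambda>x. x + (c' - c)) ` {c..c+L})"
    by (simp only: image_image)
  also have "\<dots> = circle_arc c' L"
    by (simp add: circle_arc_def add.commute)
  finally show ?thesis ..
qed

lemma circle_arc_frac_add: "circle_arc (frac u + d) L = circle_arc (u + d) L"
  by (rule circle_arc_shift) (simp add: frac_def)

lemma circle_arc_mono: "L \<le> L' \<Longrightarrow> circle_arc c L \<subseteq> circle_arc c L'"
  unfolding circle_arc_def by (intro image_mono) auto

lemma circle_arc_eq_interval:
  assumes "0 \<le> u" "u + L < 1"
  shows "circle_arc u L = {u..u+L}"
proof -
  have "frac x = x" if "x \<in> {u..u+L}" for x
    using that assms by (intro frac_eq_id) auto
  then show ?thesis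
    unfolding circle_arc_def by (metis image_cong image_ident)
qed

lemma circle_arc_Un_subset:
  assumes "p - q - (t - a) \<in> \<int>" "t \<le> a"
  shows "circle_arc p a \<union> circle_arc q b \<subseteq> circle_arc (q + t - a) (max (b + a - t) a)"
proof -
  have "circle_arc p a = circle_arc (q + t - a) a"
    using assms(1) by (intro circle_arc_shift) (simp add: algebra_simps)
  also have "\<dots> \<subseteq> circle_arc (q + t - a) (max (b + a - t) a)"
    by (intro circle_arc_mono) simp
  finally show ?thesis
    using assms(2) unfolding circle_arc_def by (auto intro!: image_mono)
qed

lemma T1_image_circle_arc: "Tsel \<alpha> \<beta> True ` circle_arc c L = circle_arc (c + \<alpha>) L"
proof -
  have "Tsel \<alpha> \<beta> True ` circle_arc c L = (\<lambda>x. frac (x + \<alpha>)) ` {c..c+L}"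
    by (simp add: circle_arc_def Tsel_def T1_def image_image)
  also have "\<dots> = frac ` ((\<lambda>x. x + \<alpha>) ` {c..c+L})"
    by (simp only: image_image)
  also have "\<dots> = circle_arc (c + \<alpha>) L"
    by (simp add: circle_arc_def add_ac)
  finally show ?thesis .
qed

lemma apply_word_rotations:
  "apply_word \<alpha> \<beta> (replicate m True) (circle_arc c L) = circle_arc (c + real m * \<alpha>) L"
  by (induction m arbitrary: c) (simp_all add: T1_image_circle_arc algebra_simps)

lemma T2_image_below:
  assumes "0 \<le> x" "x + L \<le> 1 - \<alpha>"
  shows "Tsel \<alpha> \<beta> False ` {x..x+L} \<subseteq> circle_arc (x + \<alpha> + \<beta>) L"
  using assms unfolding circle_arc_def Tsel_def T2_def by (auto intro!: imageI)

lemma T2_image_above: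
  assumes "1 - \<alpha> < x" "x + L < 1"
  shows "Tsel \<alpha> \<beta> False ` {x..x+L} \<subseteq> circle_arc (x + \<alpha>) L"
  using assms unfolding circle_arc_def Tsel_def T2_def by (auto intro!: imageI)

lemma T2_image_interval:
  "Tsel \<alpha> \<beta> False ` {u..u+L} \<subseteq> circle_arc (u + \<alpha> + \<beta>) (1 - \<alpha> - u) \<union> circle_arc 1 (u + L + \<alpha> - 1)"
proof
  fix z assume "z \<in> Tsel \<alpha> \<beta> False ` {u..u+L}"
  then obtain y where y: "u \<le> y" "y \<le> u + L" "z = T2 \<alpha> \<beta> y"
    by (auto simp: Tsel_def)
  show "z \<in> circle_arc (u + \<alpha> + \<beta>) (1 - \<alpha> - u) \<union> circle_arc 1 (u + L + \<alpha> - 1)"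
  proof (cases "y \<le> 1 - \<alpha>")
    case True
    then have "z = frac (y + \<alpha> + \<beta>)" "y + \<alpha> + \<beta> \<in> {u + \<alpha> + \<beta>..u + \<alpha> + \<beta> + (1 - \<alpha> - u)}"
      using y by (auto simp: T2_def)
    then show ?thesis
      unfolding circle_arc_def by blast
  next
    case False
    then have "z = frac (y + \<alpha>)" "y + \<alpha> \<in> {1..1 + (u + L + \<alpha> - 1)}"
      using y by (auto simp: T2_def)
    then show ?thesis
      unfolding circle_arc_def by blast
  qed
qed

section \<open>Shrinking arcs\<close>

lemma frac_orbit_hits_interval:
  fixes \<theta> c lo hi :: real
  assumes "\<theta> \<notin> \<rat>" "0 \<le> lo" "lo < hi" "hi \<le> 1"
  obtains m :: nat where "lo < frac (c + real m * \<theta>)" "frac (c + real m * \<theta>) < hi"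
proof -
  define y e where "y = (lo + hi) / 2" and "e = (hi - lo) / 2"
  have "0 < e" using assms by (simp add: e_def)
  then obtain h k :: int where "0 < k" and hk: "\<bar>of_int k * \<theta> - of_int h - (y - c)\<bar> < e"
    by (rule sequence_of_fractional_parts_is_dense[OF assms(1)])
  define d where "d = of_int k * \<theta> - of_int h - (y - c)"
  have yd: "lo < y + d \<and> y + d < hi"
    using hk unfolding abs_less_iff d_def y_def e_def by argo
  have "c + real (nat k) * \<theta> = (y + d) + of_int h"
    using \<open>0 < k\<close> by (simp add: d_def)
  then have "frac (c + real (nat k) * \<theta>) = frac (y + d)"
    by simp
  also have "\<dots> = y + d"
    using yd assms by (intro frac_eq_id) auto
  finally show thesis
    using yd by (intro that[of "nat k"]) auto
qed

lemma of_nat_mult_irrational_notin_Ints: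
  fixes \<theta> :: real
  assumes "\<theta> \<notin> \<rat>" "0 < n"
  shows "real n * \<theta> \<notin> \<int>"
proof
  assume "real n * \<theta> \<in> \<int>"
  then have "real n * \<theta> \<in> \<rat>"
    using Ints_subset_Rats by blast
  moreover have "\<theta> = real n * \<theta> / real n"
    using assms(2) by simp
  ultimately show False
    using assms(1) by (metis Rats_divide Rats_of_nat)
qed

lemma frac_mult_neq_frac_mult_minus:
  fixes \<theta> :: real
  assumes "\<theta> \<notin> \<rat>" "1 \<le> J"
  shows "frac (real J * \<theta>) \<noteq> frac (real J' * - \<theta>)"
proof
  assume "frac (real J * \<theta>) = frac (real J' * - \<theta>)"
  then obtain n where "real J * \<theta> = real J' * - \<theta> + of_int n"
    by (rule frac_eqE)
  then have "real (J + J') * \<theta> = of_int n"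
    by (simp add: algebra_simps)
  moreover have "real (J + J') * \<theta> \<notin> \<int>"
    using assms by (intro of_nat_mult_irrational_notin_Ints) simp_all
  ultimately show False
    by simp
qed

lemma frac_diff_bounds:
  fixes x a L :: real
  assumes "L < frac x" "0 \<le> a" "a < L"
  shows "L - a < frac (x - a) \<and> frac (x - a) < 1 - a"
proof -
  have "frac a = a"
    using assms frac_lt_1[of x] by (intro frac_eq_id) auto
  then have "frac (x - a) = frac x - a"
    using frac_diff_pos[of a x] assms by simp
  then show ?thesis
    using assms frac_lt_1[of x] by simp
qed

lemma frac_add_bounds:
  fixes x a L :: real
  assumes "L < frac (- x)" "0 \<le> a" "a < L"
  shows "a < frac (a + x) \<and> frac (a + x) < 1 - (L - a)"
proof -
  have "x \<notin> \<int>"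
    using assms by (auto simp: frac_neg split: if_splits)
  then have "frac x = 1 - frac (- x)"
    by (simp add: frac_neg)
  then have "frac (a + x) = a + frac x"
    using assms frac_lt_1[of "- x"] by (subst frac_unique_iff) (auto simp: frac_def)
  with \<open>frac x = 1 - frac (- x)\<close> show ?thesis
    using assms frac_lt_1[of "- x"] by simp
qed

lemma first_return:
  fixes \<theta> L :: real
  assumes "\<theta> \<notin> \<rat>" "0 < L"
  obtains J t g where "1 \<le> J" "t = frac (real J * \<theta>)" "0 < t" "t \<le> L" "t \<le> frac \<theta>" "0 < g"
    "\<And>i. 1 \<le> i \<Longrightarrow> i < J \<Longrightarrow> L + g \<le> frac (real i * \<theta>)"
proof -
  define P where "P j \<longleftrightarrow> 1 \<le> j \<and> frac (real j * \<theta>) \<le> L" for j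
  obtain m :: nat where m: "0 < frac (0 + real m * \<theta>)" "frac (0 + real m * \<theta>) < min L 1"
    by (rule frac_orbit_hits_interval[OF assms(1), of 0 "min L 1" 0]) (use assms(2) in auto)
  then have "P m"
    by (cases m) (auto simp: P_def)
  define J where "J = (LEAST j. P j)"
  have PJ: "P J"
    unfolding J_def using \<open>P m\<close> by (rule LeastI)
  have above: "L < frac (real i * \<theta>)" if "1 \<le> i" "i < J" for i
    using not_less_Least[of i P] that unfolding J_def P_def by auto
  define g where "g = Min (insert 1 ((\<lambda>i. frac (real i * \<theta>) - L) ` {1..<J}))"
  have "0 < g"
    unfolding g_def using above by (subst Min_gr_iff) auto
  moreover have "L + g \<le> frac (real i * \<theta>)" if "1 \<le> i" "i < J" for i
  proof -
    have "g \<le> frac (real i * \<theta>) - L"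
      unfolding g_def using that by (intro Min_le) auto
    then show ?thesis by simp
  qed
  moreover have "0 < frac (real J * \<theta>)"
    using of_nat_mult_irrational_notin_Ints[OF assms(1)] PJ by (simp add: P_def)
  moreover have "frac (real J * \<theta>) \<le> frac \<theta>"
  proof (cases "J = 1")
    case False
    then have "L + g \<le> frac (real 1 * \<theta>)"
      using PJ calculation(2)[of 1] by (simp add: P_def)
    with PJ \<open>0 < g\<close> show ?thesis by (simp add: P_def)
  qed simp
  ultimately show thesis
    using PJ by (intro that[of J _ g]) (auto simp: P_def)
qed

definition shrinks_to :: "real \<Rightarrow> real \<Rightarrow> real \<Rightarrow> real \<Rightarrow> bool" where
  "shrinks_to \<alpha> \<beta> L l \<longleftrightarrow> (\<forall>c. \<exists>w c'. apply_word \<alpha> \<beta> w (circle_arc c L) \<subseteq> circle_arc c' l)"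

lemma shrinks_to_refl: "shrinks_to \<alpha> \<beta> L L"
  unfolding shrinks_to_def by (metis apply_word.simps(1) order_refl)

lemma shrinks_to_mono:
  assumes "shrinks_to \<alpha> \<beta> L l" "L' \<le> L" "l \<le> l'"
  shows "shrinks_to \<alpha> \<beta> L' l'"
  unfolding shrinks_to_def
proof
  fix c
  obtain w c' where "apply_word \<alpha> \<beta> w (circle_arc c L) \<subseteq> circle_arc c' l"
    using assms(1) unfolding shrinks_to_def by blast
  moreover have "apply_word \<alpha> \<beta> w (circle_arc c L') \<subseteq> apply_word \<alpha> \<beta> w (circle_arc c L)"
    using assms(2) by (intro apply_word_mono circle_arc_mono)
  moreover have "circle_arc c' l \<subseteq> circle_arc c' l'"
    using assms(3) by (rule circle_arc_mono)
  ultimately show "\<exists>w c'. apply_word \<alpha> \<beta> w (circle_arc c L') \<subseteq> circle_arc c' l'"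
    by blast
qed

lemma shrinks_to_trans:
  assumes "shrinks_to \<alpha> \<beta> L l" "shrinks_to \<alpha> \<beta> l l'"
  shows "shrinks_to \<alpha> \<beta> L l'"
  unfolding shrinks_to_def
proof
  fix c
  obtain w c' where w: "apply_word \<alpha> \<beta> w (circle_arc c L) \<subseteq> circle_arc c' l"
    using assms(1) unfolding shrinks_to_def by blast
  obtain v c'' where v: "apply_word \<alpha> \<beta> v (circle_arc c' l) \<subseteq> circle_arc c'' l'"
    using assms(2) unfolding shrinks_to_def by blast
  have "apply_word \<alpha> \<beta> (w @ v) (circle_arc c L) \<subseteq> circle_arc c'' l'"
    using apply_word_mono[OF w, of \<alpha> \<beta> v] v by (simp add: apply_word_append)
  then show "\<exists>w c'. apply_word \<alpha> \<beta> w (circle_arc c L) \<subseteq> circle_arc c' l'"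
    by blast
qed

locale irrational_rotation =
  fixes \<alpha> :: real
  assumes alpha_pos: "0 < \<alpha>" and alpha_less_1: "\<alpha> < 1" and alpha_irrational: "\<alpha> \<notin> \<rat>"
begin

text \<open>Rotate until the first arc lies in \<open>[0, 1 - \<alpha>]\<close> and the second in \<open>(1 - \<alpha>, 1)\<close>; then one
  application of \<open>T2\<close> advances the first arc by \<open>\<beta>\<close> relative to the second.\<close>

lemma two_arcs_shift_step:
  assumes "0 \<le> a" "0 \<le> b" "a < 1 - \<alpha>" "b < \<alpha>"
    and "b < frac (p - q)" "frac (p - q) < 1 - a"
    and X: "X \<subseteq> circle_arc p a \<union> circle_arc q b"
  shows "\<exists>w r. apply_word \<alpha> \<beta> w X \<subseteq> circle_arc (p + r + \<beta>) a \<union> circle_arc (q + r) b"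
proof -
  define D where "D = frac (p - q)"
  obtain m :: nat where m: "max 0 (D - \<alpha>) < frac (p + real m * \<alpha>)"
    "frac (p + real m * \<alpha>) < min (1 - \<alpha> - a) (D - b)"
    by (rule frac_orbit_hits_interval[OF alpha_irrational, of "max 0 (D - \<alpha>)" "min (1 - \<alpha> - a) (D - b)" p])
      (use assms alpha_pos in \<open>auto simp: D_def\<close>)
  define x where "x = frac (p + real m * \<alpha>)"
  define y where "y = x - D + 1"
  have x: "0 \<le> x" "x + a \<le> 1 - \<alpha>" and y: "1 - \<alpha> < y" "y + b < 1"
    using m unfolding x_def y_def by auto
  have "circle_arc (p + real m * \<alpha>) a = {x..x+a}"
    using circle_arc_frac_add[of "p + real m * \<alpha>" 0 a] circle_arc_eq_interval[of x a] x alpha_pos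
    by (simp add: x_def)
  moreover have "circle_arc (q + real m * \<alpha>) b = {y..y+b}"
  proof -
    have "circle_arc (q + real m * \<alpha>) b = circle_arc y b"
      by (rule circle_arc_shift) (simp add: x_def y_def D_def frac_def)
    with y alpha_less_1 show ?thesis
      using circle_arc_eq_interval[of y b] by simp
  qed
  ultimately have "apply_word \<alpha> \<beta> (replicate m True @ [False]) X
      \<subseteq> Tsel \<alpha> \<beta> False ` ({x..x+a} \<union> {y..y+b})"
    using apply_word_mono[OF X, of \<alpha> \<beta> "replicate m True"]
    by (auto simp: apply_word_append apply_word_Un apply_word_rotations)
  also have "\<dots> \<subseteq> circle_arc (x + \<alpha> + \<beta>) a \<union> circle_arc (y + \<alpha>) b"
    using T2_image_below[OF x] T2_image_above[OF y] by blast
  also have "circle_arc (x + \<alpha> + \<beta>) a = circle_arc (p + (real m * \<alpha> + \<alpha>) + \<beta>) a"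
    by (rule circle_arc_shift) (simp add: x_def frac_def)
  also have "circle_arc (y + \<alpha>) b = circle_arc (q + (real m * \<alpha> + \<alpha>)) b"
    by (rule circle_arc_shift) (simp add: x_def y_def D_def frac_def)
  finally show ?thesis by blast
qed

lemma two_arcs_shift:
  assumes "0 \<le> a" "0 \<le> b" "a < 1 - \<alpha>" "b < \<alpha>"
    and X: "X \<subseteq> circle_arc p a \<union> circle_arc q b"
    and gaps: "\<And>i. i < n \<Longrightarrow> b < frac (p - q + real i * \<beta>) \<and> frac (p - q + real i * \<beta>) < 1 - a"
  shows "\<exists>w r. apply_word \<alpha> \<beta> w X \<subseteq> circle_arc (p + r + real n * \<beta>) a \<union> circle_arc (q + r) b"
  using gaps
proof (induction n)
  case 0
  show ?case
    using X by (intro exI[of _ "[]"] exI[of _ 0]) simp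
next
  case (Suc n)
  then obtain w r where w: "apply_word \<alpha> \<beta> w X
      \<subseteq> circle_arc (p + r + real n * \<beta>) a \<union> circle_arc (q + r) b"
    by auto
  have shift: "(p + r + real n * \<beta>) - (q + r) = p - q + real n * \<beta>"
    by simp
  have "b < frac ((p + r + real n * \<beta>) - (q + r))"
    "frac ((p + r + real n * \<beta>) - (q + r)) < 1 - a"
    using Suc.prems[of n] unfolding shift by simp_all
  then obtain v s where v: "apply_word \<alpha> \<beta> v (apply_word \<alpha> \<beta> w X)
      \<subseteq> circle_arc (p + r + real n * \<beta> + s + \<beta>) a \<union> circle_arc (q + r + s) b"
    using two_arcs_shift_step[where \<beta>=\<beta>, OF assms(1-4) _ _ w] by blast
  have "p + r + real n * \<beta> + s + \<beta> = p + (r + s) + real (Suc n) * \<beta>" "q + r + s = q + (r + s)"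
    by (simp_all add: algebra_simps)
  with v show ?case
    by (intro exI[of _ "w @ v"] exI[of _ "r + s"]) (simp add: apply_word_append)
qed

lemma T2_image_arc_through_0:
  assumes "1 - \<alpha> < u" "u < 1" "u + L \<le> 2 - \<alpha>"
  shows "Tsel \<alpha> \<beta> False ` circle_arc u L \<subseteq> circle_arc (u + \<alpha>) (1 - u) \<union> circle_arc (1 + \<alpha> + \<beta>) (u + L - 1)"
proof
  fix z assume "z \<in> Tsel \<alpha> \<beta> False ` circle_arc u L"
  then obtain y where y: "u \<le> y" "y \<le> u + L" "z = T2 \<alpha> \<beta> (frac y)"
    by (auto simp: Tsel_def circle_arc_def)
  show "z \<in> circle_arc (u + \<alpha>) (1 - u) \<union> circle_arc (1 + \<alpha> + \<beta>) (u + L - 1)"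
  proof (cases "y < 1")
    case True
    then have "frac y = y"
      using y assms alpha_less_1 by (intro frac_eq_id) auto
    then have "z = frac (y + \<alpha>)" "y + \<alpha> \<in> {u + \<alpha>..u + \<alpha> + (1 - u)}"
      using y True assms by (auto simp: T2_def)
    then show ?thesis
      unfolding circle_arc_def by blast
  next
    case False
    then have "frac y = y - 1"
      using y assms alpha_pos by (subst frac_unique_iff) auto
    then have "frac y \<le> 1 - \<alpha>"
      using y assms by auto
    then have "z = frac (frac y + (\<alpha> + \<beta>))"
      using y by (simp add: T2_def add.assoc)
    then have "z = frac (y + \<alpha> + \<beta>)"
      by (simp add: add.assoc)
    moreover have "y + \<alpha> + \<beta> \<in> {1 + \<alpha> + \<beta>..1 + \<alpha> + \<beta> + (u + L - 1)}"
      using y False by auto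
    ultimately show ?thesis
      unfolding circle_arc_def by blast
  qed
qed

text \<open>\<open>T2\<close> cuts an arc through its discontinuity into two pieces and advances the piece
  lying in \<open>[0, 1 - \<alpha>]\<close> by \<open>\<beta>\<close>.\<close>

lemma arc_split_head:
  assumes "0 \<le> lo" "lo < hi" "hi \<le> 1 - \<alpha>" "L - lo \<le> \<alpha>"
  obtains a w r where "lo < a" "a < hi"
    "apply_word \<alpha> \<beta> w (circle_arc c L) \<subseteq> circle_arc (c + r + \<beta>) a \<union> circle_arc (c + a + r) (L - a)"
proof -
  obtain m :: nat where m: "1 - \<alpha> - hi < frac (c + real m * \<alpha>)" "frac (c + real m * \<alpha>) < 1 - \<alpha> - lo"
    using frac_orbit_hits_interval[OF alpha_irrational, of "1 - \<alpha> - hi" "1 - \<alpha> - lo" c] assms alpha_pos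
    by auto
  define u where "u = frac (c + real m * \<alpha>)"
  define a where "a = 1 - \<alpha> - u"
  have u: "0 \<le> u" "u + L < 1" and a: "lo < a" "a < hi"
    using m assms unfolding u_def a_def by auto
  have "apply_word \<alpha> \<beta> (replicate m True @ [False]) (circle_arc c L) = Tsel \<alpha> \<beta> False ` {u..u+L}"
    using circle_arc_frac_add[of "c + real m * \<alpha>" 0 L] circle_arc_eq_interval[OF u]
    by (simp add: apply_word_append apply_word_rotations u_def)
  also have "\<dots> \<subseteq> circle_arc (u + \<alpha> + \<beta>) a \<union> circle_arc 1 (L - a)"
    using T2_image_interval[of \<alpha> \<beta> u L] by (simp add: a_def algebra_simps)
  also have "circle_arc (u + \<alpha> + \<beta>) a = circle_arc (c + (real m * \<alpha> + \<alpha>) + \<beta>) a"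
    by (rule circle_arc_shift) (simp add: u_def frac_def)
  also have "circle_arc 1 (L - a) = circle_arc (c + a + (real m * \<alpha> + \<alpha>)) (L - a)"
    by (rule circle_arc_shift) (simp add: u_def a_def frac_def)
  finally show thesis
    using a by (intro that) auto
qed

lemma arc_split_tail:
  assumes "0 \<le> lo" "lo < hi" "hi \<le> \<alpha>" "L - lo \<le> 1 - \<alpha>"
  obtains a w r where "lo < a" "a < hi"
    "apply_word \<alpha> \<beta> w (circle_arc c L) \<subseteq> circle_arc (c + r) a \<union> circle_arc (c + a + r + \<beta>) (L - a)"
proof -
  obtain m :: nat where m: "1 - hi < frac (c + real m * \<alpha>)" "frac (c + real m * \<alpha>) < 1 - lo"
    using frac_orbit_hits_interval[OF alpha_irrational, of "1 - hi" "1 - lo" c] assms alpha_less_1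
    by auto
  define u where "u = frac (c + real m * \<alpha>)"
  define a where "a = 1 - u"
  have u: "0 \<le> u" "u < 1" and a: "lo < a" "a < hi"
    using m unfolding u_def a_def by (auto simp: frac_lt_1)
  have "apply_word \<alpha> \<beta> (replicate m True @ [False]) (circle_arc c L) = Tsel \<alpha> \<beta> False ` circle_arc u L"
    using circle_arc_frac_add[of "c + real m * \<alpha>" 0 L]
    by (simp add: apply_word_append apply_word_rotations u_def)
  also have "\<dots> \<subseteq> circle_arc (u + \<alpha>) a \<union> circle_arc (1 + \<alpha> + \<beta>) (L - a)"
  proof -
    have "1 - \<alpha> < u" "u + L \<le> 2 - \<alpha>"
      using a assms unfolding a_def by auto
    from T2_image_arc_through_0[where \<beta> = \<beta>, OF this(1) u(2) this(2)] show ?thesis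
      by (simp add: a_def algebra_simps)
  qed
  also have "circle_arc (u + \<alpha>) a = circle_arc (c + (real m * \<alpha> + \<alpha>)) a"
    by (rule circle_arc_shift) (simp add: u_def frac_def)
  also have "circle_arc (1 + \<alpha> + \<beta>) (L - a) = circle_arc (c + a + (real m * \<alpha> + \<alpha>) + \<beta>) (L - a)"
    by (rule circle_arc_shift) (simp add: u_def a_def frac_def)
  finally show thesis
    using a by (intro that) auto
qed

text \<open>After the split, the offset of the two pieces runs along the orbit of \<open>\<beta>\<close> (resp. \<open>-\<beta>\<close>)
  without the pieces colliding; at its first return \<open>t\<close> to \<open>[0, L]\<close> they overlap and fit into one arc.\<close>

lemma shrinks_to_head:
  assumes J: "1 \<le> J" "t = frac (real J * \<beta>)" "\<And>i. 1 \<le> i \<Longrightarrow> i < J \<Longrightarrow> L < frac (real i * \<beta>)"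
    and a: "t \<le> lo" "lo < hi" "hi \<le> 1 - \<alpha>" "hi \<le> L" "L - lo \<le> \<alpha>"
  shows "shrinks_to \<alpha> \<beta> L (max (L - t) hi)"
  unfolding shrinks_to_def
proof
  fix c
  have "0 \<le> lo"
    using a(1) unfolding J(2) by (rule order_trans[OF frac_ge_0])
  then obtain a w1 r where a': "lo < a" "a < hi" and w1: "apply_word \<alpha> \<beta> w1 (circle_arc c L)
      \<subseteq> circle_arc (c + r + \<beta>) a \<union> circle_arc (c + a + r) (L - a)"
    using arc_split_head[where \<beta>=\<beta>, OF _ a(2,3,5)] by blast
  define p q where "p = c + r + \<beta>" and "q = c + a + r"
  have gaps: "L - a < frac (p - q + real i * \<beta>) \<and> frac (p - q + real i * \<beta>) < 1 - a"
    if "i < J - 1" for i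
  proof -
    have "p - q + real i * \<beta> = real (Suc i) * \<beta> - a"
      by (simp add: p_def q_def algebra_simps)
    moreover have "L < frac (real (Suc i) * \<beta>)"
      using J(3)[of "Suc i"] that by simp
    ultimately show ?thesis
      using frac_diff_bounds[of L "real (Suc i) * \<beta>" a] a a' \<open>0 \<le> lo\<close> by simp
  qed
  have "\<exists>w2 r2. apply_word \<alpha> \<beta> w2 (apply_word \<alpha> \<beta> w1 (circle_arc c L))
      \<subseteq> circle_arc (p + r2 + real (J - 1) * \<beta>) a \<union> circle_arc (q + r2) (L - a)"
    by (rule two_arcs_shift[OF _ _ _ _ w1[folded p_def q_def] gaps]) (use a a' \<open>0 \<le> lo\<close> in linarith)+
  then obtain w2 r2 where "apply_word \<alpha> \<beta> w2 (apply_word \<alpha> \<beta> w1 (circle_arc c L))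
      \<subseteq> circle_arc (p + r2 + real (J - 1) * \<beta>) a \<union> circle_arc (q + r2) (L - a)"
    by blast
  also have "\<dots> \<subseteq> circle_arc (q + r2 + t - a) (max (L - a + a - t) a)"
  proof (rule circle_arc_Un_subset)
    have "p + r2 + real (J - 1) * \<beta> - (q + r2) - (t - a) = real J * \<beta> - frac (real J * \<beta>)"
      using J(1,2) by (simp add: p_def q_def algebra_simps)
    then show "p + r2 + real (J - 1) * \<beta> - (q + r2) - (t - a) \<in> \<int>"
      by (simp add: frac_def)
  qed (use a a' in auto)
  also have "\<dots> \<subseteq> circle_arc (q + r2 + t - a) (max (L - t) hi)"
    by (rule circle_arc_mono) (use a' in auto)
  finally show "\<exists>w c'. apply_word \<alpha> \<beta> w (circle_arc c L) \<subseteq> circle_arc c' (max (L - t) hi)"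
    by (metis apply_word_append)
qed

lemma shrinks_to_tail:
  assumes J: "1 \<le> J" "t = frac (real J * - \<beta>)" "\<And>i. 1 \<le> i \<Longrightarrow> i < J \<Longrightarrow> L < frac (real i * - \<beta>)"
    and a: "t \<le> lo" "lo < hi" "hi \<le> \<alpha>" "hi \<le> L" "L - lo \<le> 1 - \<alpha>"
  shows "shrinks_to \<alpha> \<beta> L (max (L - t) hi)"
  unfolding shrinks_to_def
proof
  fix c
  have "0 \<le> lo"
    using a(1) unfolding J(2) by (rule order_trans[OF frac_ge_0])
  then obtain a w1 r where a': "lo < a" "a < hi" and w1: "apply_word \<alpha> \<beta> w1 (circle_arc c L)
      \<subseteq> circle_arc (c + r) a \<union> circle_arc (c + a + r + \<beta>) (L - a)"
    using arc_split_tail[where \<beta>=\<beta>, OF _ a(2,3,5)] by blast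
  define p q where "p = c + a + r + \<beta>" and "q = c + r"
  have w1': "apply_word \<alpha> \<beta> w1 (circle_arc c L) \<subseteq> circle_arc p (L - a) \<union> circle_arc q a"
    using w1 unfolding p_def q_def by blast
  have gaps: "a < frac (p - q + real i * \<beta>) \<and> frac (p - q + real i * \<beta>) < 1 - (L - a)"
    if "i < J - 1" for i
  proof -
    have "p - q + real i * \<beta> = a + real (Suc i) * \<beta>"
      by (simp add: p_def q_def algebra_simps)
    moreover have "L < frac (- (real (Suc i) * \<beta>))"
      using J(3)[of "Suc i"] that by simp
    ultimately show ?thesis
      using frac_add_bounds[of L "real (Suc i) * \<beta>" a] a a' \<open>0 \<le> lo\<close> by simp
  qed
  have "\<exists>w2 r2. apply_word \<alpha> \<beta> w2 (apply_word \<alpha> \<beta> w1 (circle_arc c L))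
      \<subseteq> circle_arc (p + r2 + real (J - 1) * \<beta>) (L - a) \<union> circle_arc (q + r2) a"
    by (rule two_arcs_shift[OF _ _ _ _ w1' gaps]) (use a a' \<open>0 \<le> lo\<close> in linarith)+
  then obtain w2 r2 where "apply_word \<alpha> \<beta> w2 (apply_word \<alpha> \<beta> w1 (circle_arc c L))
      \<subseteq> circle_arc (p + r2 + real (J - 1) * \<beta>) (L - a) \<union> circle_arc (q + r2) a"
    by blast
  also have "\<dots> \<subseteq> circle_arc (p + r2 + real (J - 1) * \<beta> + t - a) (max (L - a + a - t) a)"
  proof (subst Un_commute, rule circle_arc_Un_subset)
    have "q + r2 - (p + r2 + real (J - 1) * \<beta>) - (t - a) = real J * - \<beta> - frac (real J * - \<beta>)"
      using J(1,2) by (simp add: p_def q_def algebra_simps)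
    then show "q + r2 - (p + r2 + real (J - 1) * \<beta>) - (t - a) \<in> \<int>"
      by (simp add: frac_def)
  qed (use a a' in auto)
  also have "\<dots> \<subseteq> circle_arc (p + r2 + real (J - 1) * \<beta> + t - a) (max (L - t) hi)"
    by (rule circle_arc_mono) (use a' in auto)
  finally show "\<exists>w c'. apply_word \<alpha> \<beta> w (circle_arc c L) \<subseteq> circle_arc c' (max (L - t) hi)"
    by (metis apply_word_append)
qed

end

locale small_double_rotation = irrational_rotation +
  fixes \<beta> :: real
  assumes beta_pos: "0 < \<beta>" and beta_irrational: "\<beta> \<notin> \<rat>"
    and beta_less_alpha: "\<beta> < \<alpha>" and beta_less_1_minus_alpha: "\<beta> < 1 - \<alpha>"
begin

lemma shrinks_to_uniform_head:
  assumes "L < 1" and J: "1 \<le> J" "t = frac (real J * \<beta>)" "0 < t" "t < L" "t \<le> \<beta>" "0 < g"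
    "\<And>i. 1 \<le> i \<Longrightarrow> i < J \<Longrightarrow> L + g \<le> frac (real i * \<beta>)"
  shows "\<exists>r>0. L + r < 1 \<and> shrinks_to \<alpha> \<beta> (L + r) (L - r)"
proof -
  define m where "m = min (min t (L - t)) (min g (min (1 - L) \<alpha>))"
  have "0 < m" "m \<le> t" "m \<le> L - t" "m \<le> g" "m \<le> 1 - L" "m \<le> \<alpha>"
    using J(3,4,6) \<open>L < 1\<close> alpha_pos unfolding m_def by auto
  define r where "r = m / 4"
  have r: "0 < r" "2 * r \<le> t" "2 * r \<le> L - t" "r < g" "2 * r < 1 - L" "2 * r < \<alpha>"
    using \<open>0 < m\<close> \<open>m \<le> t\<close> \<open>m \<le> L - t\<close> \<open>m \<le> g\<close> \<open>m \<le> 1 - L\<close> \<open>m \<le> \<alpha>\<close>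
    unfolding r_def by linarith+
  have "shrinks_to \<alpha> \<beta> (L + r) (max (L + r - t) (min (L - r) (1 - \<alpha>)))"
  proof (rule shrinks_to_head[OF J(1,2), where lo = "max t (L + r - \<alpha>)"])
    show "L + r < frac (real i * \<beta>)" if "1 \<le> i" "i < J" for i
      using J(7)[OF that] r by linarith
  qed (use r J(5) beta_less_1_minus_alpha in auto)
  moreover have "max (L + r - t) (min (L - r) (1 - \<alpha>)) \<le> L - r"
    using r by auto
  ultimately have "shrinks_to \<alpha> \<beta> (L + r) (L - r)"
    by (rule shrinks_to_mono[OF _ order_refl])
  with r show ?thesis by auto
qed

lemma shrinks_to_uniform_tail:
  assumes "L \<le> \<beta>" and J: "1 \<le> J" "t = frac (real J * - \<beta>)" "0 < t" "t < L" "0 < g"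
    "\<And>i. 1 \<le> i \<Longrightarrow> i < J \<Longrightarrow> L + g \<le> frac (real i * - \<beta>)"
  shows "\<exists>r>0. L + r < 1 \<and> shrinks_to \<alpha> \<beta> (L + r) (L - r)"
proof -
  define m where "m = min (min t (L - t)) g"
  have "0 < m" "m \<le> t" "m \<le> L - t" "m \<le> g"
    using J(3,4,5) unfolding m_def by auto
  define r where "r = m / 4"
  have r: "0 < r" "2 * r \<le> t" "2 * r \<le> L - t" "r < g"
    using \<open>0 < m\<close> \<open>m \<le> t\<close> \<open>m \<le> L - t\<close> \<open>m \<le> g\<close>
    unfolding r_def by linarith+
  have "shrinks_to \<alpha> \<beta> (L + r) (max (L + r - t) (L - r))"
  proof (rule shrinks_to_tail[OF J(1,2), where lo = t])
    show "L + r < frac (real i * - \<beta>)" if "1 \<le> i" "i < J" for i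
      using J(6)[OF that] r by linarith
  qed (use r \<open>L \<le> \<beta>\<close> beta_less_alpha beta_less_1_minus_alpha in auto)
  then have "shrinks_to \<alpha> \<beta> (L + r) (L - r)"
    by (rule shrinks_to_mono) (use r in auto)
  moreover have "L + r < 1"
    using r(1,2) J(4) \<open>L \<le> \<beta>\<close> beta_less_alpha beta_less_1_minus_alpha by linarith
  ultimately show ?thesis
    using r by blast
qed

lemma shrinks_to_uniform:
  assumes "0 < L" "L < 1"
  shows "\<exists>r>0. L + r < 1 \<and> shrinks_to \<alpha> \<beta> (L + r) (L - r)"
proof -
  obtain J t g where ret: "1 \<le> J" "t = frac (real J * \<beta>)" "0 < t" "t \<le> L" "t \<le> frac \<beta>" "0 < g"
    "\<And>i. 1 \<le> i \<Longrightarrow> i < J \<Longrightarrow> L + g \<le> frac (real i * \<beta>)"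
    using first_return[OF beta_irrational \<open>0 < L\<close>] by blast
  have "frac \<beta> = \<beta>"
    using beta_pos beta_less_1_minus_alpha alpha_pos by (intro frac_eq_id) auto
  with ret(5) have "t \<le> \<beta>"
    by simp
  show ?thesis
  proof (cases "t < L")
    case True
    then show ?thesis
      by (rule shrinks_to_uniform_head[OF \<open>L < 1\<close> ret(1-3) _ \<open>t \<le> \<beta>\<close> ret(6,7)])
  next
    case False
    with ret(4) have "t = L"
      by simp
    have "- \<beta> \<notin> \<rat>"
      using beta_irrational by simp
    then obtain J' t' g' where ret': "1 \<le> J'" "t' = frac (real J' * - \<beta>)" "0 < t'" "t' \<le> L"
      "t' \<le> frac (- \<beta>)" "0 < g'" "\<And>i. 1 \<le> i \<Longrightarrow> i < J' \<Longrightarrow> L + g' \<le> frac (real i * - \<beta>)"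
      using first_return[OF _ \<open>0 < L\<close>] by blast
    have "t' \<noteq> L"
      using frac_mult_neq_frac_mult_minus[OF beta_irrational ret(1), of J'] ret(2) ret'(2) \<open>t = L\<close>
      by auto
    with ret'(4) have "t' < L"
      by simp
    moreover have "L \<le> \<beta>"
      using \<open>t = L\<close> \<open>t \<le> \<beta>\<close> by simp
    ultimately show ?thesis
      using shrinks_to_uniform_tail[OF _ ret'(1-3) _ ret'(6,7)] by blast
  qed
qed

text \<open>The infimum of the lengths that cannot be shrunk below \<open>\<epsilon>\<close> would contradict
  \<open>shrinks_to_uniform\<close>.\<close>

lemma shrinks_to_any_positive:
  assumes "0 < \<epsilon>" "0 \<le> L" "L < 1"
  shows "shrinks_to \<alpha> \<beta> L \<epsilon>"
proof (rule ccontr)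
  define S where "S = {L. 0 \<le> L \<and> L < 1 \<and> \<not> shrinks_to \<alpha> \<beta> L \<epsilon>}"
  assume "\<not> shrinks_to \<alpha> \<beta> L \<epsilon>"
  with assms have "L \<in> S"
    by (simp add: S_def)
  have bdd: "bdd_below S"
    unfolding S_def by (rule bdd_belowI[of _ 0]) auto
  have above_\<epsilon>: "\<epsilon> \<le> x" if "x \<in> S" for x
  proof (rule ccontr)
    assume "\<not> \<epsilon> \<le> x"
    then have "shrinks_to \<alpha> \<beta> x \<epsilon>"
      by (intro shrinks_to_mono[OF shrinks_to_refl order_refl]) simp
    with that show False
      by (simp add: S_def)
  qed
  define L0 where "L0 = Inf S"
  have L0: "\<epsilon> \<le> L0" "L0 \<le> L"
    unfolding L0_def using cInf_greatest[of S \<epsilon>] \<open>L \<in> S\<close> above_\<epsilon> cInf_lower[OF \<open>L \<in> S\<close> bdd]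
    by blast+
  then obtain r where r: "0 < r" "L0 + r < 1" "shrinks_to \<alpha> \<beta> (L0 + r) (L0 - r)"
    using shrinks_to_uniform[of L0] assms by auto
  obtain L' where L': "L' \<in> S" "L' < L0 + r"
    using cInf_less_iff[of S "L0 + r"] \<open>L \<in> S\<close> bdd r(1) unfolding L0_def by auto
  have "max (L0 - r) 0 < L0"
    using r(1) L0 assms(1) by auto
  then have "max (L0 - r) 0 \<notin> S"
    using cInf_lower[OF _ bdd] unfolding L0_def by (meson not_le)
  then have "shrinks_to \<alpha> \<beta> (max (L0 - r) 0) \<epsilon>"
    using r L0 unfolding S_def by auto
  moreover have "shrinks_to \<alpha> \<beta> L' (max (L0 - r) 0)"
    using L' by (intro shrinks_to_mono[OF r(3)]) auto
  ultimately have "shrinks_to \<alpha> \<beta> L' \<epsilon>"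
    by (rule shrinks_to_trans[rotated])
  with L' show False
    by (simp add: S_def)
qed

lemma T2_image_unit_interval: "Tsel \<alpha> \<beta> False ` {0..<1} \<subseteq> circle_arc (\<alpha> + \<beta>) (1 - \<beta>)"
proof
  fix z assume "z \<in> Tsel \<alpha> \<beta> False ` {0..<1}"
  then obtain y where y: "0 \<le> y" "y < 1" "z = T2 \<alpha> \<beta> y"
    by (auto simp: Tsel_def)
  show "z \<in> circle_arc (\<alpha> + \<beta>) (1 - \<beta>)"
  proof (cases "y \<le> 1 - \<alpha>")
    case True
    then have "z = frac (y + \<alpha> + \<beta>)" "y + \<alpha> + \<beta> \<in> {\<alpha> + \<beta>..\<alpha> + \<beta> + (1 - \<beta>)}"
      using y beta_less_alpha beta_pos by (auto simp: T2_def)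
    then show ?thesis unfolding circle_arc_def by blast
  next
    case False
    then have "z = frac (y + \<alpha>)" "y + \<alpha> \<in> {\<alpha> + \<beta>..\<alpha> + \<beta> + (1 - \<beta>)}"
      using y beta_less_1_minus_alpha by (auto simp: T2_def)
    then show ?thesis unfolding circle_arc_def by blast
  qed
qed

lemma word_into_short_arc:
  assumes "0 < \<epsilon>"
  obtains w c where "apply_word \<alpha> \<beta> w {0..<1} \<subseteq> circle_arc c \<epsilon>"
proof -
  have "shrinks_to \<alpha> \<beta> (1 - \<beta>) \<epsilon>"
    using assms beta_pos beta_less_1_minus_alpha alpha_pos by (intro shrinks_to_any_positive) auto
  then obtain w c where "apply_word \<alpha> \<beta> w (circle_arc (\<alpha> + \<beta>) (1 - \<beta>)) \<subseteq> circle_arc c \<epsilon>"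
    unfolding shrinks_to_def by blast
  then show thesis
    using apply_word_mono[OF T2_image_unit_interval, where w=w] by (intro that[of "False # w" c]) auto
qed

end

section \<open>Lebesgue measure of the images\<close>

lemma translate_in_sets_lebesgue: "S \<in> sets lebesgue \<Longrightarrow> (\<lambda>x::real. x + d) ` S \<in> sets lebesgue"
  using lebesgue_sets_translation[of S d] by (simp add: add.commute)

lemma emeasure_translate: "emeasure lebesgue ((\<lambda>x::real. x + d) ` S) = emeasure lebesgue S"
  using emeasure_lebesgue_affine[of 1 d S] by (simp add: add.commute)

lemma floor_eq_of_nat:
  fixes x :: real
  assumes "real k \<le> x" "x < real k + 1"
  shows "\<lfloor>x\<rfloor> = int k"
  using assms by (intro floor_unique) auto

lemma frac_image_eq_UN:
  fixes S :: "real set"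
  assumes "S \<subseteq> {0..}"
  shows "frac ` S = (\<Union>k. (\<lambda>x. x - real k) ` (S \<inter> {real k..<real k + 1}))"
proof (intro equalityI subsetI)
  fix y assume "y \<in> frac ` S"
  then obtain x where x: "x \<in> S" "y = frac x"
    by auto
  with assms have "real (nat \<lfloor>x\<rfloor>) = of_int \<lfloor>x\<rfloor>"
    by auto
  then have "x \<in> S \<inter> {real (nat \<lfloor>x\<rfloor>)..<real (nat \<lfloor>x\<rfloor>) + 1}" "y = x - real (nat \<lfloor>x\<rfloor>)"
    using x by (auto simp: frac_def)
  then show "y \<in> (\<Union>k. (\<lambda>x. x - real k) ` (S \<inter> {real k..<real k + 1}))"
    by blast
next
  fix y assume "y \<in> (\<Union>k. (\<lambda>x. x - real k) ` (S \<inter> {real k..<real k + 1}))"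
  then obtain k x where "x \<in> S" "real k \<le> x" "x < real k + 1" "y = x - real k"
    by auto
  then have "y = frac x"
    by (simp add: frac_def floor_eq_of_nat)
  with \<open>x \<in> S\<close> show "y \<in> frac ` S"
    by blast
qed

lemma frac_image_in_sets_lebesgue:
  fixes S :: "real set"
  assumes "S \<in> sets lebesgue" "S \<subseteq> {0..}"
  shows "frac ` S \<in> sets lebesgue"
proof -
  have "(\<lambda>x. x - real k) ` (S \<inter> {real k..<real k + 1}) \<in> sets lebesgue" for k
  proof -
    have "S \<inter> {real k..<real k + 1} \<in> sets lebesgue"
      using assms(1) by auto
    from translate_in_sets_lebesgue[OF this, of "- real k"] show ?thesis
      by simp
  qed
  then show ?thesis
    unfolding frac_image_eq_UN[OF assms(2)] by auto
qed

lemma emeasure_frac_image_le: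
  fixes S :: "real set"
  assumes "S \<in> sets lebesgue" "S \<subseteq> {0..}"
  shows "emeasure lebesgue (frac ` S) \<le> emeasure lebesgue S"
proof -
  define A where "A k = S \<inter> {real k..<real k + 1}" for k
  have A: "A k \<in> sets lebesgue" for k
    unfolding A_def using assms(1) by auto
  have "emeasure lebesgue (frac ` S) \<le> (\<Sum>k. emeasure lebesgue ((\<lambda>x. x - real k) ` A k))"
    unfolding frac_image_eq_UN[OF assms(2)] A_def[symmetric]
    using A translate_in_sets_lebesgue[of "A _" "- real _"] by (intro emeasure_subadditive_countably) auto
  also have "\<dots> = (\<Sum>k. emeasure lebesgue (A k))"
    using emeasure_translate[of "- real _" "A _"] by simp
  also have "\<dots> = emeasure lebesgue (\<Union>k. A k)"
  proof (rule suminf_emeasure)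
    show "disjoint_family A"
      unfolding disjoint_family_on_def A_def by (force dest: floor_eq_of_nat)
  qed (use A in auto)
  also have "(\<Union>k. A k) = S"
  proof (intro equalityI subsetI)
    fix x assume "x \<in> S"
    with assms(2) have "real (nat \<lfloor>x\<rfloor>) = of_int \<lfloor>x\<rfloor>"
      by auto
    with \<open>x \<in> S\<close> have "x \<in> A (nat \<lfloor>x\<rfloor>)"
      by (auto simp: A_def)
    then show "x \<in> (\<Union>k. A k)" by blast
  qed (auto simp: A_def)
  finally show ?thesis .
qed

lemma rotate_image_eq: "(\<lambda>y. frac (y + d)) ` Y = frac ` ((\<lambda>y. y + frac d) ` Y)"
  by (simp add: image_image)

lemma rotate_image_in_sets_lebesgue:
  fixes Y :: "real set"
  assumes "Y \<in> sets lebesgue" "Y \<subseteq> {0..}"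
  shows "(\<lambda>y. frac (y + d)) ` Y \<in> sets lebesgue"
  unfolding rotate_image_eq using assms
  by (intro frac_image_in_sets_lebesgue translate_in_sets_lebesgue) auto

lemma emeasure_rotate_image_le:
  fixes Y :: "real set"
  assumes "Y \<in> sets lebesgue" "Y \<subseteq> {0..}"
  shows "emeasure lebesgue ((\<lambda>y. frac (y + d)) ` Y) \<le> emeasure lebesgue Y"
proof -
  have "emeasure lebesgue (frac ` ((\<lambda>y. y + frac d) ` Y)) \<le> emeasure lebesgue ((\<lambda>y. y + frac d) ` Y)"
    using assms by (intro emeasure_frac_image_le translate_in_sets_lebesgue) auto
  then show ?thesis
    by (simp only: rotate_image_eq emeasure_translate)
qed

lemma Tsel_image_eq:
  "Tsel \<alpha> \<beta> b ` Y = (\<lambda>y. frac (y + (\<alpha> + (if b then 0 else \<beta>)))) ` (Y \<inter> {..1 - \<alpha>})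
      \<union> (\<lambda>y. frac (y + \<alpha>)) ` (Y \<inter> {1 - \<alpha><..})"
proof -
  have "Tsel \<alpha> \<beta> b ` Y = Tsel \<alpha> \<beta> b ` (Y \<inter> {..1 - \<alpha>}) \<union> Tsel \<alpha> \<beta> b ` (Y \<inter> {1 - \<alpha><..})"
    by (subst image_Un[symmetric]) (auto intro: arg_cong[where f = "image _"])
  also have "\<dots> = (\<lambda>y. frac (y + (\<alpha> + (if b then 0 else \<beta>)))) ` (Y \<inter> {..1 - \<alpha>})
      \<union> (\<lambda>y. frac (y + \<alpha>)) ` (Y \<inter> {1 - \<alpha><..})"
    by (intro arg_cong2[where f = "(\<union>)"] image_cong) (auto simp: Tsel_def T1_def T2_def add.assoc)
  finally show ?thesis .
qed

lemma Tsel_in_unit_interval: "Tsel \<alpha> \<beta> b y \<in> {0..<1}"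
  by (simp add: Tsel_def T1_def T2_def frac_lt_1)

lemma Tsel_image_in_sets_lebesgue:
  assumes "Y \<in> sets lebesgue" "Y \<subseteq> {0..}"
  shows "Tsel \<alpha> \<beta> b ` Y \<in> sets lebesgue"
  unfolding Tsel_image_eq using assms by (intro sets.Un rotate_image_in_sets_lebesgue) auto

lemma emeasure_Tsel_image_le:
  assumes "Y \<in> sets lebesgue" "Y \<subseteq> {0..}"
  shows "emeasure lebesgue (Tsel \<alpha> \<beta> b ` Y) \<le> emeasure lebesgue Y"
proof -
  define Y1 Y2 where "Y1 = Y \<inter> {..1 - \<alpha>}" and "Y2 = Y \<inter> {1 - \<alpha><..}"
  have Y: "Y1 \<in> sets lebesgue" "Y2 \<in> sets lebesgue" "Y1 \<subseteq> {0..}" "Y2 \<subseteq> {0..}"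
    using assms by (auto simp: Y1_def Y2_def)
  have "emeasure lebesgue (Tsel \<alpha> \<beta> b ` Y) \<le> emeasure lebesgue ((\<lambda>y. frac (y + (\<alpha> + (if b then 0 else \<beta>)))) ` Y1)
      + emeasure lebesgue ((\<lambda>y. frac (y + \<alpha>)) ` Y2)"
    unfolding Tsel_image_eq Y1_def[symmetric] Y2_def[symmetric]
    using Y by (intro emeasure_subadditive rotate_image_in_sets_lebesgue)
  also have "\<dots> \<le> emeasure lebesgue Y1 + emeasure lebesgue Y2"
    using Y by (intro add_mono emeasure_rotate_image_le)
  also have "\<dots> = emeasure lebesgue (Y1 \<union> Y2)"
    using Y by (intro plus_emeasure) (auto simp: Y1_def Y2_def)
  also have "Y1 \<union> Y2 = Y"
    by (auto simp: Y1_def Y2_def)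
  finally show ?thesis .
qed

lemma apply_word_in_sets_lebesgue:
  "X \<in> sets lebesgue \<Longrightarrow> X \<subseteq> {0..} \<Longrightarrow> apply_word \<alpha> \<beta> w X \<in> sets lebesgue"
proof (induction w arbitrary: X)
  case (Cons b w)
  have "Tsel \<alpha> \<beta> b ` X \<subseteq> {0..}"
    using Tsel_in_unit_interval by auto
  with Cons show ?case
    using Tsel_image_in_sets_lebesgue by simp
qed simp

lemma emeasure_apply_word_le:
  "X \<in> sets lebesgue \<Longrightarrow> X \<subseteq> {0..} \<Longrightarrow> emeasure lebesgue (apply_word \<alpha> \<beta> w X) \<le> emeasure lebesgue X"
proof (induction w arbitrary: X)
  case (Cons b w)
  have "Tsel \<alpha> \<beta> b ` X \<subseteq> {0..}"
    using Tsel_in_unit_interval by auto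
  with Cons.prems have "emeasure lebesgue (apply_word \<alpha> \<beta> w (Tsel \<alpha> \<beta> b ` X)) \<le> emeasure lebesgue (Tsel \<alpha> \<beta> b ` X)"
    by (intro Cons.IH Tsel_image_in_sets_lebesgue)
  also have "\<dots> \<le> emeasure lebesgue X"
    using Cons.prems by (rule emeasure_Tsel_image_le)
  finally show ?case by simp
qed simp

lemma circle_arc_eq_frac_image: "circle_arc c l = frac ` {frac c..frac c + l}"
  using circle_arc_frac_add[of c 0 l] by (simp add: circle_arc_def)

lemma circle_arc_subset: "circle_arc c l \<subseteq> {0..<1}"
  by (auto simp: circle_arc_def frac_lt_1)

lemma circle_arc_in_sets_lebesgue: "circle_arc c l \<in> sets lebesgue"
  unfolding circle_arc_eq_frac_image by (intro frac_image_in_sets_lebesgue) auto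

lemma emeasure_circle_arc_le:
  assumes "0 \<le> l"
  shows "emeasure lebesgue (circle_arc c l) \<le> ennreal l"
proof -
  have "emeasure lebesgue (circle_arc c l) \<le> emeasure lebesgue {frac c..frac c + l}"
    unfolding circle_arc_eq_frac_image by (intro emeasure_frac_image_le) auto
  with assms show ?thesis by simp
qed

text \<open>\<open>F\<^sub>n\<close> applies \<open>T\<^bsub>\<omega> (n - 1)\<^esub>\<close> first, hence the reversed word.\<close>

lemma Fcomp_image_eq_apply_word: "Fcomp \<alpha> \<beta> n \<omega> ` X = apply_word \<alpha> \<beta> (rev (map \<omega> [0..<n])) X"
proof (induction n arbitrary: X)
  case (Suc n)
  have "Fcomp \<alpha> \<beta> (Suc n) \<omega> ` X = Fcomp \<alpha> \<beta> n \<omega> ` Tsel \<alpha> \<beta> (\<omega> n) ` X"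
    by (simp add: image_image)
  then show ?case
    by (simp add: Suc.IH apply_word_append)
qed simp

lemma Fcomp_image_in_sets_lebesgue:
  "X \<in> sets lebesgue \<Longrightarrow> X \<subseteq> {0..} \<Longrightarrow> Fcomp \<alpha> \<beta> n \<omega> ` X \<in> sets lebesgue"
  unfolding Fcomp_image_eq_apply_word by (rule apply_word_in_sets_lebesgue)

lemma emeasure_Fcomp_image_le:
  "X \<in> sets lebesgue \<Longrightarrow> X \<subseteq> {0..} \<Longrightarrow> emeasure lebesgue (Fcomp \<alpha> \<beta> n \<omega> ` X) \<le> emeasure lebesgue X"
  unfolding Fcomp_image_eq_apply_word by (rule emeasure_apply_word_le)

lemma Fcomp_add: "Fcomp \<alpha> \<beta> (m + n) \<omega> = Fcomp \<alpha> \<beta> m \<omega> \<circ> Fcomp \<alpha> \<beta> n (\<lambda>i. \<omega> (m + i))"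
  by (induction n) (simp_all add: comp_assoc)

lemma Fcomp_image_unit_interval: "Fcomp \<alpha> \<beta> n \<omega> ` {0..<1} \<subseteq> {0..<1}"
proof (induction n)
  case (Suc n)
  have "Fcomp \<alpha> \<beta> (Suc n) \<omega> ` {0..<1} = Fcomp \<alpha> \<beta> n \<omega> ` Tsel \<alpha> \<beta> (\<omega> n) ` {0..<1}"
    by (simp add: image_image)
  also have "\<dots> \<subseteq> Fcomp \<alpha> \<beta> n \<omega> ` {0..<1}"
    using Tsel_in_unit_interval by (intro image_mono) auto
  finally show ?case
    using Suc by blast
qed simp

lemma Fcomp_image_antimono:
  assumes "m \<le> n"
  shows "Fcomp \<alpha> \<beta> n \<omega> ` {0..<1} \<subseteq> Fcomp \<alpha> \<beta> m \<omega> ` {0..<1}"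
proof -
  obtain d where "n = m + d"
    using assms le_iff_add by blast
  then have "Fcomp \<alpha> \<beta> n \<omega> ` {0..<1} = Fcomp \<alpha> \<beta> m \<omega> ` Fcomp \<alpha> \<beta> d (\<lambda>i. \<omega> (m + i)) ` {0..<1}"
    by (simp only: Fcomp_add image_comp)
  also have "\<dots> \<subseteq> Fcomp \<alpha> \<beta> m \<omega> ` {0..<1}"
    using Fcomp_image_unit_interval by (rule image_mono)
  finally show ?thesis .
qed

lemma Fcomp_block:
  assumes "map (\<lambda>i. \<omega> (m + i)) [0..<length v] = v"
  shows "Fcomp \<alpha> \<beta> (m + length v) \<omega> ` X = Fcomp \<alpha> \<beta> m \<omega> ` apply_word \<alpha> \<beta> (rev v) X"
proof -
  have "Fcomp \<alpha> \<beta> (m + length v) \<omega> ` X = Fcomp \<alpha> \<beta> m \<omega> ` Fcomp \<alpha> \<beta> (length v) (\<lambda>i. \<omega> (m + i)) ` X"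
    by (simp only: Fcomp_add image_comp)
  then show ?thesis
    using assms by (simp add: Fcomp_image_eq_apply_word)
qed

section \<open>Words in i.i.d. sequences\<close>

definition occurs :: "'a list \<Rightarrow> (nat \<Rightarrow> 'a) \<Rightarrow> bool" where
  "occurs v \<omega> \<longleftrightarrow> (\<exists>m. map (\<lambda>i. \<omega> (m + i)) [0..<length v] = v)"

lemma (in prob_space) AE_ex_mem_if_indep_events:
  fixes E :: "nat \<Rightarrow> 'a set"
  assumes indep: "indep_events E UNIV" and "0 < q" and prob: "\<And>n. q \<le> prob (E n)"
  shows "AE x in M. \<exists>n. x \<in> E n"
proof -
  have E: "E n \<in> events" for n
    using indep by (auto simp: indep_events_def)
  define U where "U n = (\<Union>m\<in>{n..}. E m)" for n
  have U: "range U \<subseteq> events"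
    using E by (auto simp: U_def)
  have "decseq U"
    unfolding decseq_def U_def by (intro allI impI UN_mono) auto
  with U have "(\<lambda>n. prob (U n)) \<longlonglongrightarrow> prob (\<Inter>n. U n)"
    by (rule finite_Lim_measure_decseq)
  moreover have "q \<le> prob (U n)" for n
  proof -
    have "prob (E n) \<le> prob (U n)"
      using U by (intro finite_measure_mono) (auto simp: U_def)
    with prob[of n] show ?thesis by simp
  qed
  ultimately have "q \<le> prob (\<Inter>n. U n)"
    by (intro LIMSEQ_le_const) auto
  moreover have "prob (\<Inter>n. U n) = 0 \<or> prob (\<Inter>n. U n) = 1"
    using borel_0_1_law[OF indep] by (simp add: U_def)
  ultimately have "prob (\<Inter>n. U n) = 1"
    using \<open>0 < q\<close> by auto
  then have "AE x in M. x \<in> (\<Inter>n. U n)"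
    by (rule AE_prob_1)
  then show ?thesis
    by (rule AE_mp) (rule AE_I2, auto simp: U_def)
qed

lemma (in product_prob_space) indep_vars_coordinates:
  assumes "I \<noteq> {}"
  shows "P.indep_vars M (\<lambda>i \<omega>. \<omega> i) I"
proof -
  have rv: "(\<lambda>\<omega>. \<omega> i) \<in> measurable (PiM I M) (M i)" if "i \<in> I" for i
    using that by (rule measurable_component_singleton)
  have "distr (PiM I M) (PiM I M) (\<lambda>\<omega>. \<lambda>i\<in>I. \<omega> i) = distr (PiM I M) (PiM I M) (\<lambda>\<omega>. \<omega>)"
    by (intro distr_cong) (auto simp: space_PiM)
  also have "\<dots> = PiM I M"
    by simp
  also have "\<dots> = PiM I (\<lambda>i. distr (PiM I M) (M i) (\<lambda>\<omega>. \<omega> i))"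
    by (intro PiM_cong refl PiM_component[symmetric])
  finally show ?thesis
    using rv by (subst P.indep_vars_iff_distr_eq_PiM'[OF assms]) auto
qed

lemma (in product_prob_space) indep_events_prod_emb:
  assumes "I \<noteq> {}" "disjoint_family K" "\<And>r. K r \<subseteq> I" "\<And>r. B r \<in> sets (PiM (K r) M)"
  shows "P.indep_events (\<lambda>r. prod_emb I M (K r) (B r)) UNIV"
proof -
  have "P.indep_vars (\<lambda>r. PiM (K r) M) (\<lambda>r \<omega>. restrict \<omega> (K r)) UNIV"
    by (rule P.indep_vars_restrict[OF indep_vars_coordinates[OF assms(1)]]) (use assms(2,3) in auto)
  moreover have "{x \<in> space (PiM (K r) M). x \<in> B r} \<in> sets (PiM (K r) M)" for r
    using assms(4)[of r] sets.sets_into_space by (simp add: Int_absorb1 Collect_conj_eq)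
  ultimately have "P.indep_events (\<lambda>r. {\<omega> \<in> space (PiM I M). restrict \<omega> (K r) \<in> B r}) UNIV"
    by (rule P.indep_eventsI_indep_vars)
  moreover have "(\<lambda>r. {\<omega> \<in> space (PiM I M). restrict \<omega> (K r) \<in> B r}) = (\<lambda>r. prod_emb I M (K r) (B r))"
    by (intro ext) (auto simp: prod_emb_def space_PiM)
  ultimately show ?thesis
    by simp
qed

lemma disjoint_family_blocks: "disjoint_family (\<lambda>r::nat. {r * k..<r * k + k})"
  unfolding disjoint_family_on_def
proof (intro ballI impI)
  fix r s :: nat assume "r \<noteq> s"
  then have "Suc r \<le> s \<or> Suc s \<le> r"
    by linarith
  then have "r * k + k \<le> s * k \<or> s * k + k \<le> r * k"
    using mult_le_mono1[of "Suc r" s k] mult_le_mono1[of "Suc s" r k] by auto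
  then show "{r * k..<r * k + k} \<inter> {s * k..<s * k + k} = {}"
    by auto
qed

text \<open>The blocks of length \<open>k = length v\<close> starting at multiples of \<open>k\<close> are independent, and each
  equals \<open>v\<close> with probability at least \<open>q\<^sup>k\<close> for \<open>q\<close> the least probability of a letter of \<open>v\<close>.\<close>

lemma AE_occurs_iid:
  fixes P :: "'a pmf" and v :: "'a list"
  assumes "set v \<subseteq> set_pmf P"
  shows "AE \<omega> in PiM UNIV (\<lambda>_::nat. measure_pmf P). occurs v \<omega>"
proof (cases "v = []")
  case True
  then show ?thesis
    by (simp add: occurs_def)
next
  case False
  define k N where "k = length v" and "N = (\<lambda>_::nat. measure_pmf P)"
  interpret product_prob_space N UNIV
    by (rule product_prob_spaceI) (simp add: N_def prob_space_measure_pmf)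
  define K where "K r = {r * k..<r * k + k}" for r
  define B where "B r = PiE (K r) (\<lambda>j. {v ! (j - r * k)})" for r
  define E where "E r = prod_emb UNIV N (K r) (B r)" for r
  have indep: "P.indep_events E UNIV"
    unfolding E_def
  proof (rule indep_events_prod_emb)
    show "disjoint_family K"
      unfolding K_def by (rule disjoint_family_blocks)
    show "B r \<in> sets (PiM (K r) N)" for r
      unfolding B_def by (rule sets_PiM_I_finite) (auto simp: K_def N_def)
  qed simp_all
  define q where "q = Min (pmf P ` set v)"
  have "0 < q"
    using assms False by (auto simp: q_def pmf_positive)
  have prob: "q ^ k \<le> P.prob (E r)" for r
  proof -
    have "emeasure (PiM UNIV N) (E r) = (\<Prod>j\<in>K r. emeasure (N j) {v ! (j - r * k)})"
      unfolding E_def B_def by (rule emeasure_PiM_emb) (auto simp: K_def N_def prob_space_measure_pmf)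
    then have "P.prob (E r) = (\<Prod>j\<in>K r. pmf P (v ! (j - r * k)))"
      by (simp add: N_def emeasure_pmf_single prod_ennreal measure_def prod_nonneg)
    moreover have "q \<le> pmf P (v ! (j - r * k))" if "j \<in> K r" for j
      using that by (auto simp: q_def K_def k_def)
    then have "(\<Prod>j\<in>K r. q) \<le> (\<Prod>j\<in>K r. pmf P (v ! (j - r * k)))"
      using \<open>0 < q\<close> by (intro prod_mono) auto
    ultimately show ?thesis
      by (simp add: K_def)
  qed
  moreover have "0 < q ^ k"
    using \<open>0 < q\<close> by simp
  ultimately have "AE \<omega> in PiM UNIV N. \<exists>r. \<omega> \<in> E r"
    using indep by (intro P.AE_ex_mem_if_indep_events)
  then have "AE \<omega> in PiM UNIV N. occurs v \<omega>"
  proof (rule AE_mp, intro AE_I2 impI)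
    fix \<omega> assume "\<exists>r. \<omega> \<in> E r"
    then obtain r where r: "restrict \<omega> (K r) \<in> B r"
      by (auto simp: E_def prod_emb_def)
    have "\<omega> j = v ! (j - r * k)" if "j \<in> K r" for j
      using PiE_mem[OF r[unfolded B_def] that] that by simp
    then have "\<omega> (r * k + i) = v ! i" if "i < k" for i
      using that by (simp add: K_def)
    then have "map (\<lambda>i. \<omega> (r * k + i)) [0..<length v] = v"
      by (intro nth_equalityI) (simp_all add: k_def)
    then show "occurs v \<omega>"
      unfolding occurs_def by blast
  qed
  then show ?thesis
    unfolding N_def .
qed

lemma (in small_double_rotation) measure_Fcomp_image_tendsto_0:
  assumes "\<And>v. occurs v \<omega>"
  shows "(\<lambda>n. measure lebesgue (Fcomp \<alpha> \<beta> n \<omega> ` {0..<1})) \<longlonglongrightarrow> 0"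
proof (rule LIMSEQ_I)
  fix \<epsilon> :: real assume "0 < \<epsilon>"
  then obtain w c where w: "apply_word \<alpha> \<beta> w {0..<1} \<subseteq> circle_arc c (\<epsilon> / 2)"
    using word_into_short_arc[of "\<epsilon> / 2"] by auto
  have arc: "circle_arc c (\<epsilon> / 2) \<in> sets lebesgue" "circle_arc c (\<epsilon> / 2) \<subseteq> {0..}"
    using circle_arc_in_sets_lebesgue circle_arc_subset by fastforce+
  obtain m where m: "map (\<lambda>i. \<omega> (m + i)) [0..<length (rev w)] = rev w"
    using assms[of "rev w"] unfolding occurs_def by blast
  have "measure lebesgue (Fcomp \<alpha> \<beta> n \<omega> ` {0..<1}) \<le> \<epsilon> / 2" if "m + length w \<le> n" for n
  proof -
    have "Fcomp \<alpha> \<beta> n \<omega> ` {0..<1} \<subseteq> Fcomp \<alpha> \<beta> (m + length w) \<omega> ` {0..<1}"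
      using that by (rule Fcomp_image_antimono)
    also have "\<dots> = Fcomp \<alpha> \<beta> m \<omega> ` apply_word \<alpha> \<beta> w {0..<1}"
      using Fcomp_block[OF m] by simp
    also have "\<dots> \<subseteq> Fcomp \<alpha> \<beta> m \<omega> ` circle_arc c (\<epsilon> / 2)"
      using w by (rule image_mono)
    finally have "emeasure lebesgue (Fcomp \<alpha> \<beta> n \<omega> ` {0..<1})
        \<le> emeasure lebesgue (Fcomp \<alpha> \<beta> m \<omega> ` circle_arc c (\<epsilon> / 2))"
      using arc by (intro emeasure_mono Fcomp_image_in_sets_lebesgue)
    also have "\<dots> \<le> emeasure lebesgue (circle_arc c (\<epsilon> / 2))"
      using arc by (intro emeasure_Fcomp_image_le)
    also have "\<dots> \<le> ennreal (\<epsilon> / 2)"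
      using \<open>0 < \<epsilon>\<close> by (intro emeasure_circle_arc_le) simp
    finally have "emeasure lebesgue (Fcomp \<alpha> \<beta> n \<omega> ` {0..<1}) \<le> ennreal (\<epsilon> / 2)" .
    then show ?thesis
      unfolding measure_def using enn2real_leI[of "\<epsilon> / 2"] \<open>0 < \<epsilon>\<close> by simp
  qed
  then show "\<exists>N. \<forall>n\<ge>N. norm (measure lebesgue (Fcomp \<alpha> \<beta> n \<omega> ` {0..<1}) - 0) < \<epsilon>"
    using \<open>0 < \<epsilon>\<close> by (intro exI[of _ "m + length w"]) force
qed

theorem theorem4p2:
  fixes \<alpha> :: real
  assumes "0 < \<alpha>" and "\<alpha> < 1" and "\<alpha> \<notin> \<rat>"
  shows "\<exists>\<beta>0>0. \<forall>\<beta> p. 0 < \<beta> \<and> \<beta> < \<beta>0 \<and> \<beta> \<notin> \<rat> \<and> 0 < p \<and> p < 1 \<longrightarrow>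
           (AE \<omega> in sel_space p.
              (\<forall>n. Fcomp \<alpha> \<beta> n \<omega> ` {0..<1} \<in> sets lebesgue) \<and>
              (\<lambda>n. measure lebesgue (Fcomp \<alpha> \<beta> n \<omega> ` {0..<1})) \<longlonglongrightarrow> 0)"
proof (intro exI[of _ "min \<alpha> (1 - \<alpha>)"] conjI allI impI)
  show "0 < min \<alpha> (1 - \<alpha>)"
    using assms by simp
  fix \<beta> p :: real
  assume h: "0 < \<beta> \<and> \<beta> < min \<alpha> (1 - \<alpha>) \<and> \<beta> \<notin> \<rat> \<and> 0 < p \<and> p < 1"
  interpret small_double_rotation \<alpha> \<beta>
    by unfold_locales (use assms h in auto)
  have "AE \<omega> in sel_space p. \<forall>v. occurs v \<omega>"
    unfolding AE_all_countable sel_space_def using h by (auto intro!: AE_occurs_iid)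
  then show "AE \<omega> in sel_space p. (\<forall>n. Fcomp \<alpha> \<beta> n \<omega> ` {0..<1} \<in> sets lebesgue) \<and>
      (\<lambda>n. measure lebesgue (Fcomp \<alpha> \<beta> n \<omega> ` {0..<1})) \<longlonglongrightarrow> 0"
    by (rule AE_mp) (auto intro!: Fcomp_image_in_sets_lebesgue measure_Fcomp_image_tendsto_0)
qed

end
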